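(* For $k\in\mathbb{N}$ and $n=2^k-1$, for all $1\le j<n$, $$\bar\mu^{(k)}_{n,j}=(\rho^k-1)\big(c^{(k)}_j-\pi^{(k)}_j\big).$$ Consequently, for all $1\le j<n$, $$\mu^{(k+1)}_{n,j}=\frac{\rho^{2k-1}}{\rho^{k-1}+1}\big(c^{(k)}_j-\pi^{(k)}_j\big)\ge0 .$$
   Context: $\rho=1+\sqrt2$; $\alpha_t=\rho^{\nu(t+1)-1}+1$ ($\nu(i)$ the largest $j$ with $2^j\mid i$). For $k\in\mathbb{N}$, $n=2^k-1$, $\pi^{(k)}=[\alpha_0,\dots,\alpha_{n-1}]$, indexed $\pi^{(k)}_1,\dots,\pi^{(k)}_n$. Define $c^{(k)}\in\mathbb{R}^n$ (indexed $1,\dots,n$) by $c^{(1)}=[2(\rho-1)]$, $c^{(k+1)}=[\pi^{(k)},(1+\rho^{-k})(\rho^{k-1}+1),\rho c^{(k)}-(\rho-1-\rho^{-k})\pi^{(k)}]$. Multipliers $\mu^{(k)}_{i,j}$, $i\in\{1,\dots,n,*\}$, $j\in\{1,\dots,n\}$: $\mu^{(k)}_{i,j}=\bar\mu^{(k)}_{i,j}$ for $i\ne*$ and $\mu^{(k)}_{*,j}=c^{(k)}_j+\mathbf 1\{j=1\}$. $\bar\mu^{(1)}_{1,1}=0$. For $n=2^k-1$ and $1\le i,j\le 2n+1$, $\bar\mu^{(k+1)}_{i,j}$ is the sum of: $\bar\mu^{(k)}_{i,j}\mathbf 1\{1\le i,j\le n\}+\rho^2\bar\mu^{(k)}_{i-n-1,j-n-1}\mathbf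 1\{n+2\le i,j\le 2n+1\}$; $\rho^k\mathbf 1\{(i,j)=(n,n+1)\}+\rho^2\mathbf 1\{(i,j)=(n+1,n+2)\}+(\rho-\rho^{-k})(\rho^{k-1}+1)\mathbf 1\{(i,j)=(2n+1,n+1)\}$; and $\big(1-\frac{\rho^k}{\rho^{k-1}+1}\big)(c^{(k)}_j-\pi^{(k)}_j)\mathbf 1\{i=n,1\le j\le n\}+\frac{\rho^k}{\rho^{k-1}+1}(c^{(k)}_j-\pi^{(k)}_j)\mathbf 1\{i=n+1,1\le j\le n\}+\frac{\rho^k}{\rho^{k-1}+1}\pi^{(k)}_{j-n-1}\mathbf 1\{i=n,n+2\le j\le 2n+1\}+\frac{\rho}{\rho^{k-1}+1}\pi^{(k)}_{j-n-1}\mathbf 1\{i=n+1,n+2\le j\le2n+1\}+\big((\rho+1)c^{(k)}_{j-n-1}-(1+\rho^{-k})\pi^{(k)}_{j-n-1}\big)\mathbf 1\{i=2n+1,n+2\le j\le 2n+1\}$. *)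

theory Defs
  imports Complex_Main
begin

definition rho :: real where "rho = 1 + sqrt 2"

text \<open>nu i: the largest j with 2^j dividing i (meaningful for i \<ge> 1).\<close>
definition nu :: "nat \<Rightarrow> nat" where "nu i = (GREATEST j. 2 ^ j dvd i)"

definition alpha :: "nat \<Rightarrow> real" where
  "alpha t = rho powi (int (nu (t + 1)) - 1) + 1"

definition piv :: "nat \<Rightarrow> nat \<Rightarrow> real" where
  "piv k j = (if 1 \<le> j \<and> j \<le> 2 ^ k - 1 then alpha (j - 1) else 0)"

text \<open>c^(k), indexed 1..2^k-1 (0 outside the index range); c 0 is a dummy.\<close>
primrec cvec :: "nat \<Rightarrow> nat \<Rightarrow> real" where
  "cvec 0 j = 0"
| "cvec (Suc k) j =
     (if k = 0 then (if j = 1 then 2 * (rho - 1) else 0)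
      else (let n = 2 ^ k - 1 in
        if 1 \<le> j \<and> j \<le> n then piv k j
        else if j = n + 1 then (1 + inverse (rho ^ k)) * (rho ^ (k - 1) + 1)
        else if n + 2 \<le> j \<and> j \<le> 2 * n + 1 then
          rho * cvec k (j - n - 1) - (rho - 1 - inverse (rho ^ k)) * piv k (j - n - 1)
        else 0))"

text \<open>bar mu^(k)_{i,j}, indices 1..2^k-1 (0 outside); mubar 0 is a dummy.\<close>
primrec mubar :: "nat \<Rightarrow> nat \<Rightarrow> nat \<Rightarrow> real" where
  "mubar 0 i j = 0"
| "mubar (Suc k) i j =
     (if k = 0 then 0
      else (let n = 2 ^ k - 1; ind = (\<lambda>b. if b then 1 else (0::real)) in
        if 1 \<le> i \<and> i \<le> 2 * n + 1 \<and> 1 \<le> j \<and> j \<le> 2 * n + 1 then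
          mubar k i j * ind (1 \<le> i \<and> i \<le> n \<and> 1 \<le> j \<and> j \<le> n)
        + rho ^ 2 * mubar k (i - n - 1) (j - n - 1) * ind (n + 2 \<le> i \<and> i \<le> 2 * n + 1 \<and> n + 2 \<le> j \<and> j \<le> 2 * n + 1)
        + rho ^ k * ind ((i, j) = (n, n + 1))
        + rho ^ 2 * ind ((i, j) = (n + 1, n + 2))
        + (rho - inverse (rho ^ k)) * (rho ^ (k - 1) + 1) * ind ((i, j) = (2 * n + 1, n + 1))
        + (1 - rho ^ k / (rho ^ (k - 1) + 1)) * (cvec k j - piv k j) * ind (i = n \<and> 1 \<le> j \<and> j \<le> n)
        + rho ^ k / (rho ^ (k - 1) + 1) * (cvec k j - piv k j) * ind (i = n + 1 \<and> 1 \<le> j \<and> j \<le> n)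
        + rho ^ k / (rho ^ (k - 1) + 1) * piv k (j - n - 1) * ind (i = n \<and> n + 2 \<le> j \<and> j \<le> 2 * n + 1)
        + rho / (rho ^ (k - 1) + 1) * piv k (j - n - 1) * ind (i = n + 1 \<and> n + 2 \<le> j \<and> j \<le> 2 * n + 1)
        + ((rho + 1) * cvec k (j - n - 1) - (1 + inverse (rho ^ k)) * piv k (j - n - 1))
            * ind (i = 2 * n + 1 \<and> n + 2 \<le> j \<and> j \<le> 2 * n + 1)
        else 0))"

text \<open>mu^(k)_{i,j} with row index i \<in> {1..n} \<union> {*}; * is represented by None.\<close>
fun mu :: "nat \<Rightarrow> nat option \<Rightarrow> nat \<Rightarrow> real" where
  "mu k (Some i) j = mubar k i j"
| "mu k None j = cvec k j + (if j = 1 then 1 else 0)"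

end

theory Submission
  imports Defs
begin

(* Write g_k(j) = c^(k)_j - pi^(k)_j. The indices of level k+1 split into the lower block
   j < 2^k, the middle index 2^k and the upper block 2^k + j, on which the recursions give
   g_(k+1) = 0, rho^-k (rho^(k-1) + 1) and rho g_k(j) + rho^-k pi_j; hence g >= 0.
   The last row of bar mu obeys a recursion of the same block shape, and rho^2 = 2 rho + 1 is
   exactly what carries the relation  bar mu_(n,j) = (rho^k - 1) g_k(j)  from level k to k+1.
   Row 2^k - 1 of bar mu^(k+1) adds (1 - rho^k / (rho^(k-1) + 1)) g_k to that last row, and
   the two coefficients sum to rho^(2k-1) / (rho^(k-1) + 1). *)

lemma rho_gt_1: "rho > 1"
  unfolding rho_def by simp

lemma rho_squared: "rho\<^sup>2 = 2 * rho + 1"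
  unfolding rho_def by (simp add: power2_eq_square algebra_simps)

lemma inverse_rho: "inverse rho = rho - 2"
proof -
  have "rho * (rho - 2) = 1"
    using rho_squared by (simp add: power2_eq_square algebra_simps)
  then show ?thesis
    by (rule inverse_unique)
qed

lemma dyadic_block_cases:
  fixes j k :: nat
  obtains "j < 2 ^ k" | "j = 2 ^ k" | j' where "1 \<le> j'" "j' < 2 ^ k" "j = 2 ^ k + j'"
    | "2 ^ Suc k \<le> j"
proof -
  consider "j < 2 ^ k" | "j = 2 ^ k" | "2 ^ k < j" "j < 2 ^ Suc k" | "2 ^ Suc k \<le> j"
    by linarith
  then show thesis
    by cases (use that in \<open>auto intro: that(3)[of "j - 2 ^ k"]\<close>)
qed

lemma power_of_two_eq_Suc:
  fixes k :: nat
  assumes "k \<ge> 1"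
  obtains n :: nat where "2 ^ k = Suc n" "n \<ge> 1"
proof
  show "2 ^ k = Suc (2 ^ k - 1 :: nat)"
    by simp
  show "2 ^ k - 1 \<ge> (1::nat)"
    using power_increasing[OF assms, of "2::nat"] by simp
qed

lemma nu_eqI:
  assumes "i > 0" "2 ^ m dvd i" "\<not> 2 ^ Suc m dvd i"
  shows "nu i = m"
  unfolding nu_def
proof (rule Greatest_equality)
  fix y
  assume "2 ^ y dvd i"
  show "y \<le> m"
  proof (rule ccontr)
    assume "\<not> y \<le> m"
    then have "(2::nat) ^ Suc m dvd 2 ^ y"
      by (intro le_imp_power_dvd) simp
    with \<open>2 ^ y dvd i\<close> assms(3) show False
      using dvd_trans by blast
  qed
qed (fact assms(2))

lemma nu_power_of_two: "nu (2 ^ k) = k"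
  by (rule nu_eqI) auto

lemma nu_add_power_of_two:
  assumes "1 \<le> j" "j < 2 ^ k"
  shows "nu (2 ^ k + j) = nu j"
proof -
  have "2 ^ y dvd 2 ^ k + j \<longleftrightarrow> 2 ^ y dvd j" for y :: nat
  proof (cases "y \<le> k")
    case True
    then have "(2::nat) ^ y dvd 2 ^ k"
      by (simp add: le_imp_power_dvd)
    then show ?thesis
      by (simp add: dvd_add_right_iff)
  next
    case False
    then have "(2::nat) ^ Suc k \<le> 2 ^ y"
      by (intro power_increasing) auto
    then have "j < 2 ^ y" "2 ^ k + j < 2 ^ y"
      using assms(2) by auto
    then have "\<not> 2 ^ y dvd j" "\<not> 2 ^ y dvd 2 ^ k + j"
      using assms(1) by (auto simp: nat_dvd_not_less)
    then show ?thesis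
      by blast
  qed
  then show ?thesis
    unfolding nu_def by simp
qed

lemma piv_nonneg: "piv k j \<ge> 0"
  using rho_gt_1 unfolding piv_def alpha_def by (simp add: add_nonneg_nonneg)

lemma piv_eq_0: "2 ^ k \<le> j \<Longrightarrow> piv k j = 0"
  unfolding piv_def by auto

lemma piv_Suc_low: "j < 2 ^ k \<Longrightarrow> piv (Suc k) j = piv k j"
  unfolding piv_def by auto

lemma piv_Suc_middle: "k \<ge> 1 \<Longrightarrow> piv (Suc k) (2 ^ k) = rho ^ (k - 1) + 1"
  unfolding piv_def alpha_def using nu_power_of_two[of k] rho_gt_1
  by (auto simp: power_int_def nat_diff_distrib)

lemma piv_Suc_high:
  assumes "1 \<le> j" "j < 2 ^ k"
  shows "piv (Suc k) (2 ^ k + j) = piv k j"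
  using assms nu_add_power_of_two[OF assms] unfolding piv_def alpha_def by auto

lemma piv_one: "piv 1 1 = rho - 1"
  using nu_power_of_two[of 0] inverse_rho unfolding piv_def alpha_def by simp

lemma cvec_eq_0:
  assumes "2 ^ k \<le> j"
  shows "cvec k j = 0"
proof (cases "k \<ge> 2")
  case True
  then obtain m where m: "k = Suc m" "m \<ge> 1"
    by (cases k) auto
  obtain n where "2 ^ m = Suc n"
    using power_of_two_eq_Suc[OF m(2)] by blast
  with m assms show ?thesis
    by (simp add: Let_def)
next
  case False
  then have "k = 0 \<or> k = 1"
    by auto
  with assms show ?thesis
    by auto
qed

lemma cvec_Suc_low:
  assumes "k \<ge> 1" "j < 2 ^ k"
  shows "cvec (Suc k) j = piv k j"
proof -
  obtain n where "2 ^ k = Suc n" "n \<ge> 1"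
    using power_of_two_eq_Suc[OF assms(1)] by blast
  with assms show ?thesis
    by (simp add: Let_def piv_def)
qed

lemma cvec_Suc_middle:
  assumes "k \<ge> 1"
  shows "cvec (Suc k) (2 ^ k) = (1 + inverse (rho ^ k)) * (rho ^ (k - 1) + 1)"
proof -
  obtain n where "2 ^ k = Suc n" "n \<ge> 1"
    using power_of_two_eq_Suc[OF assms(1)] by blast
  with assms show ?thesis
    by (simp add: Let_def)
qed

lemma cvec_Suc_high:
  assumes "k \<ge> 1" "1 \<le> j" "j < 2 ^ k"
  shows "cvec (Suc k) (2 ^ k + j) = rho * cvec k j - (rho - 1 - inverse (rho ^ k)) * piv k j"
proof -
  obtain n where "2 ^ k = Suc n" "n \<ge> 1"
    using power_of_two_eq_Suc[OF assms(1)] by blast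
  with assms show ?thesis
    by (simp add: Let_def)
qed

lemma mubar_Suc_last_row_low:
  assumes "k \<ge> 1" "j < 2 ^ k"
  shows "mubar (Suc k) (2 ^ Suc k - 1) j = 0"
proof -
  obtain n where "2 ^ k = Suc n" "n \<ge> 1"
    using power_of_two_eq_Suc[OF assms(1)] by blast
  with assms show ?thesis
    by (simp add: Let_def)
qed

lemma mubar_Suc_last_row_middle:
  assumes "k \<ge> 1"
  shows "mubar (Suc k) (2 ^ Suc k - 1) (2 ^ k) = (rho - inverse (rho ^ k)) * (rho ^ (k - 1) + 1)"
proof -
  obtain n where "2 ^ k = Suc n" "n \<ge> 1"
    using power_of_two_eq_Suc[OF assms(1)] by blast
  with assms show ?thesis
    by (simp add: Let_def)
qed

lemma mubar_Suc_last_row_high: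
  assumes "k \<ge> 1" "1 \<le> j" "j < 2 ^ k"
  shows "mubar (Suc k) (2 ^ Suc k - 1) (2 ^ k + j)
    = rho\<^sup>2 * mubar k (2 ^ k - 1) j + ((rho + 1) * cvec k j - (1 + inverse (rho ^ k)) * piv k j)"
proof -
  obtain n where "2 ^ k = Suc n" "n \<ge> 1"
    using power_of_two_eq_Suc[OF assms(1)] by blast
  with assms show ?thesis
    by (simp add: Let_def)
qed

lemma mubar_Suc_upper_last_row:
  assumes "k \<ge> 1" "1 \<le> j" "j < 2 ^ k"
  shows "mubar (Suc k) (2 ^ k - 1) j
    = mubar k (2 ^ k - 1) j + (1 - rho ^ k / (rho ^ (k - 1) + 1)) * (cvec k j - piv k j)"
proof -
  obtain n where "2 ^ k = Suc n" "n \<ge> 1"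
    using power_of_two_eq_Suc[OF assms(1)] by blast
  with assms show ?thesis
    by (simp add: Let_def)
qed

(* From here on the recursions are used only through the block equations above. *)
declare cvec.simps(2) [simp del] mubar.simps(2) [simp del]

lemma cvec_minus_piv_Suc_low:
  assumes "k \<ge> 1" "j < 2 ^ k"
  shows "cvec (Suc k) j - piv (Suc k) j = 0"
  using assms by (simp add: cvec_Suc_low piv_Suc_low)

lemma cvec_minus_piv_Suc_middle:
  assumes "k \<ge> 1"
  shows "cvec (Suc k) (2 ^ k) - piv (Suc k) (2 ^ k) = (rho ^ (k - 1) + 1) / rho ^ k"
  using assms rho_gt_1 by (simp add: cvec_Suc_middle piv_Suc_middle field_simps)

lemma cvec_minus_piv_Suc_high:
  assumes "k \<ge> 1" "1 \<le> j" "j < 2 ^ k"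
  shows "cvec (Suc k) (2 ^ k + j) - piv (Suc k) (2 ^ k + j)
    = rho * (cvec k j - piv k j) + piv k j / rho ^ k"
  unfolding cvec_Suc_high[OF assms] piv_Suc_high[OF assms(2,3)]
  using rho_gt_1 by (simp add: field_simps)

lemma piv_le_cvec: "piv k j \<le> cvec k j"
proof (induction k arbitrary: j)
  case 0
  then show ?case
    by (simp add: piv_def)
next
  case (Suc k)
  show ?case
  proof (cases "k = 0")
    case True
    then show ?thesis
      using piv_one rho_gt_1 by (cases "j = 1") (auto simp: piv_def cvec.simps)
  next
    case False
    then have "k \<ge> 1"
      by simp
    show ?thesis
    proof (cases rule: dyadic_block_cases[of j k])
      case 1
      then show ?thesis
        using cvec_minus_piv_Suc_low[OF \<open>k \<ge> 1\<close>] by simp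
    next
      case 2
      have "0 \<le> (rho ^ (k - 1) + 1) / rho ^ k"
        using rho_gt_1 by simp
      then show ?thesis
        using 2 cvec_minus_piv_Suc_middle[OF \<open>k \<ge> 1\<close>] by simp
    next
      case (3 j')
      have "0 \<le> rho * (cvec k j' - piv k j') + piv k j' / rho ^ k"
        using Suc.IH[of j'] piv_nonneg[of k j'] rho_gt_1 by simp
      then show ?thesis
        unfolding 3(3) using cvec_minus_piv_Suc_high[OF \<open>k \<ge> 1\<close> 3(1,2)] by simp
    next
      case 4
      then show ?thesis
        by (simp add: cvec_eq_0 piv_eq_0)
    qed
  qed
qed

lemma mubar_last_row:
  assumes "j < 2 ^ k - 1"
  shows "mubar k (2 ^ k - 1) j = (rho ^ k - 1) * (cvec k j - piv k j)"
  using assms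
proof (induction k arbitrary: j)
  case 0
  then show ?case
    by simp
next
  case (Suc k)
  show ?case
  proof (cases "k = 0")
    case True
    with Suc.prems show ?thesis
      by (simp add: mubar.simps cvec.simps piv_def)
  next
    case False
    then have "k \<ge> 1"
      by simp
    show ?thesis
    proof (cases rule: dyadic_block_cases[of j k])
      case 1
      then show ?thesis
        using mubar_Suc_last_row_low cvec_minus_piv_Suc_low \<open>k \<ge> 1\<close> by simp
    next
      case 2
      have "rho - inverse (rho ^ k) = (rho ^ Suc k - 1) / rho ^ k"
        using rho_gt_1 by (simp add: field_simps)
      then show ?thesis
        unfolding 2 mubar_Suc_last_row_middle[OF \<open>k \<ge> 1\<close>]
          cvec_minus_piv_Suc_middle[OF \<open>k \<ge> 1\<close>]
        by simp
    next
      case (3 j')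
      define g where "g = cvec k j' - piv k j'"
      define p where "p = piv k j'"
      have "j' < 2 ^ k - 1"
        using 3 Suc.prems by simp
      then have IH: "mubar k (2 ^ k - 1) j' = (rho ^ k - 1) * g"
        unfolding g_def by (rule Suc.IH)
      have "rho\<^sup>2 * ((rho ^ k - 1) * g) + ((rho + 1) * (p + g) - (1 + inverse (rho ^ k)) * p)
          - (rho ^ Suc k - 1) * (rho * g + p / rho ^ k) = (2 * rho + 1 - rho\<^sup>2) * g"
        using rho_gt_1 by (simp add: field_simps power2_eq_square)
      also have "\<dots> = 0"
        using rho_squared by simp
      finally have "rho\<^sup>2 * ((rho ^ k - 1) * g) + ((rho + 1) * (p + g) - (1 + inverse (rho ^ k)) * p)
          = (rho ^ Suc k - 1) * (rho * g + p / rho ^ k)"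
        by simp
      then show ?thesis
        unfolding 3(3) mubar_Suc_last_row_high[OF \<open>k \<ge> 1\<close> 3(1,2)]
          cvec_minus_piv_Suc_high[OF \<open>k \<ge> 1\<close> 3(1,2)] IH
        by (simp add: g_def p_def)
    next
      case 4
      with Suc.prems show ?thesis
        by simp
    qed
  qed
qed

lemma mu_Suc_upper_last_row:
  assumes "k \<ge> 1" "1 \<le> j" "j < 2 ^ k - 1"
  shows "mu (Suc k) (Some (2 ^ k - 1)) j
    = rho ^ (2 * k - 1) / (rho ^ (k - 1) + 1) * (cvec k j - piv k j)"
proof -
  have "rho ^ (k - 1) + 1 > 0"
    using rho_gt_1 by (simp add: add_pos_pos)
  moreover have "rho ^ (2 * k - 1) = rho ^ k * rho ^ (k - 1)"
    using assms(1) by (simp flip: power_add add: mult_2)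
  ultimately have coefficient: "(rho ^ k - 1) + (1 - rho ^ k / (rho ^ (k - 1) + 1))
      = rho ^ (2 * k - 1) / (rho ^ (k - 1) + 1)"
    by (simp add: field_simps)
  have "j < 2 ^ k"
    using assms(3) by simp
  then have "mu (Suc k) (Some (2 ^ k - 1)) j
      = mubar k (2 ^ k - 1) j + (1 - rho ^ k / (rho ^ (k - 1) + 1)) * (cvec k j - piv k j)"
    using mubar_Suc_upper_last_row[OF assms(1,2)] by simp
  also have "\<dots> = ((rho ^ k - 1) + (1 - rho ^ k / (rho ^ (k - 1) + 1))) * (cvec k j - piv k j)"
    using mubar_last_row[OF assms(3)] by (simp add: algebra_simps)
  finally show ?thesis
    unfolding coefficient .
qed

theorem lemma15:
  fixes k :: nat
  assumes "k \<ge> 1"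
  shows "(\<forall>j. 1 \<le> j \<and> j < 2 ^ k - 1 \<longrightarrow>
            mubar k (2 ^ k - 1) j = (rho ^ k - 1) * (cvec k j - piv k j))
       \<and> (\<forall>j. 1 \<le> j \<and> j < 2 ^ k - 1 \<longrightarrow>
            mu (k + 1) (Some (2 ^ k - 1)) j
              = rho ^ (2 * k - 1) / (rho ^ (k - 1) + 1) * (cvec k j - piv k j)
            \<and> mu (k + 1) (Some (2 ^ k - 1)) j \<ge> 0)"
proof (intro conjI allI impI; elim conjE)
  fix j :: nat
  assume j: "1 \<le> j" "j < 2 ^ k - 1"
  show "mubar k (2 ^ k - 1) j = (rho ^ k - 1) * (cvec k j - piv k j)"
    by (rule mubar_last_row[OF j(2)])
  show mu_eq: "mu (k + 1) (Some (2 ^ k - 1)) j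
      = rho ^ (2 * k - 1) / (rho ^ (k - 1) + 1) * (cvec k j - piv k j)"
    using mu_Suc_upper_last_row[OF assms j] by simp
  have "0 \<le> rho ^ (2 * k - 1) / (rho ^ (k - 1) + 1) * (cvec k j - piv k j)"
    using rho_gt_1 piv_le_cvec[of k j] by (simp add: add_pos_pos)
  then show "mu (k + 1) (Some (2 ^ k - 1)) j \<ge> 0"
    unfolding mu_eq .
qed

end
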